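(* Let $A\in M_n(\mathbb{C})$ and suppose the Schur map $S_A\colon M_n(\mathbb{C})\to M_n(\mathbb{C})$, $S_A(B)=A\circ B$, is nonzero and multiplicative. Then the following are equivalent: (i) $S_A$ is $*$-preserving, i.e. $S_A(B^* )=S_A(B)^*$ for all $B$; (ii) $\|A\|=n$; (iii) $\frac{1}{n}A$ is an orthogonal projection; (iv) the operator norm of $S_A$ is $1$.
   Context: $A\circ B=(a_{ij}b_{ij})$ is the entrywise (Schur) product; multiplicative means $S_A(BC)=S_A(B)S_A(C)$ for all $B,C$. $\|A\|$ is the operator norm of $A$ on $\mathbb{C}^n$, and the norm of $S_A$ is its operator norm when $M_n(\mathbb{C})$ carries the operator norm on domain and range. *)

theory Defs
  imports "HOL-Analysis.Analysis"
begin

text \<open>n x n complex matrices are represented as complex^'n^'n, with n = CARD('n).\<close>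

definition schur :: "complex^'n^'n \<Rightarrow> complex^'n^'n \<Rightarrow> complex^'n^'n" where
  "schur A B = (\<chi> i j. A$i$j * B$i$j)"

definition cadj :: "complex^'n^'n \<Rightarrow> complex^'n^'n" where
  "cadj B = (\<chi> i j. cnj (B$j$i))"

definition opnorm :: "complex^'n^'n \<Rightarrow> real" where
  "opnorm M = onorm (\<lambda>x::complex^'n. M *v x)"

definition schur_map_norm :: "complex^'n^'n \<Rightarrow> real" where
  "schur_map_norm A = (SUP B\<in>{B::complex^'n^'n. opnorm B \<le> 1}. opnorm (schur A B))"

definition orth_proj :: "complex^'n^'n \<Rightarrow> bool" where
  "orth_proj P \<longleftrightarrow> P ** P = P \<and> cadj P = P"

end

theory Submission
  imports Defs
begin

text \<open>
  Multiplicativity of a nonzero Schur map forces \<open>A\<^sub>i\<^sub>i = 1\<close> and \<open>A\<^sub>i\<^sub>k = A\<^sub>i\<^sub>j A\<^sub>j\<^sub>k\<close>,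
  hence \<open>A\<^sub>i\<^sub>j A\<^sub>j\<^sub>i = 1\<close>, and each of the four conditions turns out to be equivalent to
  all entries of \<open>A\<close> being unimodular. For \<open>\<parallel>A\<parallel>\<close>: the \<open>k\<close>-th column is an eigenvector
  with eigenvalue \<open>n\<close>, so \<open>\<parallel>A\<parallel> \<ge> n\<close>; unimodular entries give \<open>\<parallel>A\<parallel> \<le> n\<close>; conversely,
  \<open>A\<close> has rank one, so \<open>\<parallel>A\<parallel> \<le> n\<close> bounds the Frobenius norm, \<open>\<Sum> |A\<^sub>i\<^sub>j|\<^sup>2 \<le> n\<^sup>2\<close>, and then
  \<open>\<Sum> (|A\<^sub>i\<^sub>j| - |A\<^sub>j\<^sub>i|)\<^sup>2 = 2 \<Sum> |A\<^sub>i\<^sub>j|\<^sup>2 - 2n\<^sup>2 \<le> 0\<close> forces \<open>|A\<^sub>i\<^sub>j| = |A\<^sub>j\<^sub>i| = 1\<close>. For the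
  Schur map: with unimodular entries \<open>A \<circ> B = D B D\<^sup>*\<close> for a diagonal unitary \<open>D\<close>, and
  conversely \<open>|A\<^sub>a\<^sub>b| \<le> \<parallel>A \<circ> E\<^sub>a\<^sub>b\<parallel> \<le> \<parallel>S\<^sub>A\<parallel>\<close> for the matrix unit \<open>E\<^sub>a\<^sub>b\<close>.
\<close>

lemma norm_vec_power2: "(norm (x::complex^'n))\<^sup>2 = (\<Sum>i\<in>UNIV. (norm (x$i))\<^sup>2)"
  unfolding norm_vec_def L2_set_def by (simp add: sum_nonneg)

lemma norm_matrix_vector_mult_le_opnorm: "norm (M *v x) \<le> opnorm M * norm x"
  for M :: "complex^'n^'n"
  unfolding opnorm_def by (rule onorm[OF matrix_vector_mul_bounded_linear])

lemma opnorm_bound: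
  fixes M :: "complex^'n^'n"
  assumes "0 \<le> b" and "\<And>x::complex^'n. norm (M *v x) \<le> b * norm x"
  shows "opnorm M \<le> b"
  unfolding opnorm_def using assms by (rule onorm_bound)

lemma opnorm_nonneg: "0 \<le> opnorm (M :: complex^'n^'n)"
  unfolding opnorm_def by (rule onorm_pos_le[OF matrix_vector_mul_bounded_linear])

lemma norm_entry_le_opnorm: "norm (M$i$j) \<le> opnorm M"
  for M :: "complex^'n^'n"
proof -
  have "(M *v axis j 1) $ i = M$i$j"
    by (simp add: matrix_vector_mult_def axis_def if_distrib cong: if_cong)
  hence "norm (M$i$j) \<le> norm (M *v axis j 1)"
    using Finite_Cartesian_Product.norm_nth_le[of "M *v axis j 1" i] by simp
  also have "\<dots> \<le> opnorm M"
    using norm_matrix_vector_mult_le_opnorm[of M "axis j 1"] by (simp add: norm_axis_1)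
  finally show ?thesis .
qed

lemma opnorm_le_sum_norm_entries: "opnorm M \<le> (\<Sum>i\<in>UNIV. \<Sum>j\<in>UNIV. norm (M$i$j))"
  for M :: "complex^'n^'n"
proof (rule opnorm_bound)
  fix x :: "complex^'n"
  have "norm (M *v x) \<le> (\<Sum>i\<in>UNIV. norm ((M *v x)$i))"
    unfolding norm_vec_def by (rule L2_set_le_sum) auto
  also have "\<dots> \<le> (\<Sum>i\<in>UNIV. \<Sum>j\<in>UNIV. norm (M$i$j) * norm x)"
  proof (rule sum_mono)
    fix i
    have "norm ((M *v x)$i) \<le> (\<Sum>j\<in>UNIV. norm (M$i$j * x$j))"
      unfolding matrix_vector_mult_def by (simp add: norm_sum)
    also have "\<dots> \<le> (\<Sum>j\<in>UNIV. norm (M$i$j) * norm x)"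
      by (rule sum_mono) (simp add: norm_mult mult_left_mono Finite_Cartesian_Product.norm_nth_le)
    finally show "norm ((M *v x)$i) \<le> (\<Sum>j\<in>UNIV. norm (M$i$j) * norm x)" .
  qed
  finally show "norm (M *v x) \<le> (\<Sum>i\<in>UNIV. \<Sum>j\<in>UNIV. norm (M$i$j)) * norm x"
    by (simp add: sum_distrib_right)
qed (simp add: sum_nonneg)

lemma opnorm_mat_1: "opnorm (mat 1 :: complex^'n^'n) = 1"
proof (rule antisym)
  show "opnorm (mat 1 :: complex^'n^'n) \<le> 1" by (rule opnorm_bound) auto
  fix k :: 'n
  show "1 \<le> opnorm (mat 1 :: complex^'n^'n)"
    using norm_matrix_vector_mult_le_opnorm[of "mat 1 :: complex^'n^'n" "axis k 1"]
    by (simp add: norm_axis_1)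
qed

definition matrix_unit :: "'n \<Rightarrow> 'n \<Rightarrow> complex^'n^'n" where
  "matrix_unit a b = (\<chi> p q. if p = a \<and> q = b then 1 else 0)"

lemma matrix_unit_mult_vector: "matrix_unit a b *v x = (\<chi> i. if i = a then x$b else 0)"
  by (simp add: matrix_unit_def matrix_vector_mult_def vec_eq_iff if_distrib[of "\<lambda>c. c * _"] cong: if_cong)

lemma opnorm_matrix_unit_le: "opnorm (matrix_unit a b :: complex^'n^'n) \<le> 1"
proof (rule opnorm_bound)
  fix x :: "complex^'n"
  have "(norm (matrix_unit a b *v x))\<^sup>2 = (\<Sum>i\<in>UNIV. if i = a then (norm (x$b))\<^sup>2 else 0)"
    unfolding norm_vec_power2 matrix_unit_mult_vector by (intro sum.cong) auto
  hence "norm (matrix_unit a b *v x) = norm (x$b)"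
    by (simp add: power2_eq_iff_nonneg)
  thus "norm (matrix_unit a b *v x) \<le> 1 * norm x"
    using Finite_Cartesian_Product.norm_nth_le[of x b] by simp
qed simp

lemma bdd_above_opnorm_schur:
  "bdd_above ((\<lambda>B. opnorm (schur A B)) ` {B::complex^'n^'n. opnorm B \<le> 1})"
proof (rule bdd_aboveI2)
  fix B :: "complex^'n^'n" assume "B \<in> {B. opnorm B \<le> 1}"
  hence entries_le: "norm (B$i$j) \<le> 1" for i j
    using norm_entry_le_opnorm[of B i j] by simp
  have "opnorm (schur A B) \<le> (\<Sum>i\<in>UNIV. \<Sum>j\<in>UNIV. norm (schur A B $i$j))"
    by (rule opnorm_le_sum_norm_entries)
  also have "\<dots> \<le> (\<Sum>i\<in>UNIV. \<Sum>j\<in>UNIV. norm (A$i$j))"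
    by (intro sum_mono) (simp add: schur_def norm_mult mult_left_le entries_le)
  finally show "opnorm (schur A B) \<le> (\<Sum>i\<in>UNIV. \<Sum>j\<in>UNIV. norm (A$i$j))" .
qed

lemma schur_cadj_iff: "(\<forall>B. schur A (cadj B) = cadj (schur A B)) \<longleftrightarrow> cadj A = A"
proof
  assume star: "\<forall>B. schur A (cadj B) = cadj (schur A B)"
  have "cnj (A$j$i) = A$i$j" for i j
    using arg_cong[OF star[rule_format, of "\<chi> i j. 1"], of "\<lambda>M. M$i$j"]
    by (simp add: schur_def cadj_def)
  then show "cadj A = A" by (simp add: cadj_def vec_eq_iff)
next
  assume "cadj A = A"
  then have "cnj (A$j$i) = A$i$j" for i j by (simp add: cadj_def vec_eq_iff)
  then show "\<forall>B. schur A (cadj B) = cadj (schur A B)"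
    by (simp add: schur_def cadj_def vec_eq_iff)
qed

lemma schur_multiplicative_cocycle:
  fixes A :: "complex^'n^'n"
  assumes "\<forall>B C. schur A (B ** C) = schur A B ** schur A C"
  shows "A$i$k = A$i$j * A$j$k"
proof -
  have "schur A (matrix_unit i j ** matrix_unit j k) $i$k
      = (schur A (matrix_unit i j) ** schur A (matrix_unit j k)) $i$k"
    using assms by simp
  thus ?thesis
    by (simp add: schur_def matrix_matrix_mult_def matrix_unit_def if_distrib cong: if_cong)
qed

lemma schur_multiplicative_diag:
  fixes A :: "complex^'n^'n"
  assumes nonzero: "schur A \<noteq> (\<lambda>B. 0)"
    and mult: "\<forall>B C. schur A (B ** C) = schur A B ** schur A C"
  shows "A$i$i = 1"
proof -
  obtain B where "schur A B \<noteq> 0" using nonzero by auto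
  then obtain a b where "A$a$b \<noteq> 0" by (auto simp: schur_def vec_eq_iff)
  moreover have "A$a$b = A$a$i * A$i$b" by (rule schur_multiplicative_cocycle[OF mult])
  ultimately have "A$a$i \<noteq> 0" by auto
  moreover have "A$a$i = A$a$i * A$i$i" by (rule schur_multiplicative_cocycle[OF mult])
  ultimately show ?thesis by simp
qed

locale schur_cocycle =
  fixes A :: "complex^'n^'n"
  assumes diag [simp]: "A$i$i = 1"
    and cocycle: "A$i$k = A$i$j * A$j$k"
begin

lemma mult_transpose_entry: "A$i$j * A$j$i = 1"
  using cocycle[of i i j] by simp

lemma norm_mult_transpose_entry: "norm (A$i$j) * norm (A$j$i) = 1"
  by (metis mult_transpose_entry norm_mult norm_one)

lemma cadj_eq_iff_unimodular: "cadj A = A \<longleftrightarrow> (\<forall>i j. norm (A$i$j) = 1)"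
proof -
  have "cnj (A$j$i) = A$i$j \<longleftrightarrow> norm (A$j$i) = 1" for i j
  proof -
    have "cnj (A$j$i) = A$i$j \<longleftrightarrow> A$j$i * cnj (A$j$i) = 1"
      using mult_transpose_entry[of j i]
      by (metis mult.commute mult_cancel_left mult_zero_right zero_neq_one)
    also have "\<dots> \<longleftrightarrow> norm (A$j$i) = 1"
      by (simp add: complex_norm_square[symmetric] power2_eq_1_iff del: of_real_power)
        (smt (verit) norm_ge_zero)
    finally show ?thesis .
  qed
  then show ?thesis by (auto simp: cadj_def vec_eq_iff)
qed

lemma scaled_idempotent:
  "(\<chi> i j. A$i$j / of_nat CARD('n)) ** (\<chi> i j. A$i$j / of_nat CARD('n)) = (\<chi> i j. A$i$j / of_nat CARD('n))"
proof -
  have "(\<Sum>k\<in>UNIV. A$i$k / of_nat CARD('n) * (A$k$j / of_nat CARD('n)))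
      = (\<Sum>k\<in>(UNIV::'n set). A$i$j / (of_nat CARD('n))\<^sup>2)" for i j
    by (intro sum.cong) (simp_all add: cocycle[symmetric] power2_eq_square)
  then show ?thesis by (simp add: matrix_matrix_mult_def vec_eq_iff power2_eq_square)
qed

lemma orth_proj_scaled_iff: "orth_proj (\<chi> i j. A$i$j / of_nat CARD('n)) \<longleftrightarrow> cadj A = A"
  by (simp add: orth_proj_def scaled_idempotent cadj_def vec_eq_iff)

lemma mult_column: "A *v column k A = real CARD('n) *\<^sub>R column k A"
proof -
  have "(\<Sum>j\<in>UNIV. A$i$j * A$j$k) = (\<Sum>j\<in>(UNIV::'n set). A$i$k)" for i
    by (intro sum.cong) (simp_all add: cocycle[symmetric])
  then show ?thesis
    by (simp add: matrix_vector_mult_def column_def vec_eq_iff) (simp add: scaleR_conv_of_real)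
qed

lemma card_le_opnorm: "real CARD('n) \<le> opnorm A"
proof -
  fix k :: 'n
  have "column k A \<noteq> 0" by (metis column_def diag vec_lambda_beta zero_index zero_neq_one)
  moreover have "real CARD('n) * norm (column k A) \<le> opnorm A * norm (column k A)"
    using norm_matrix_vector_mult_le_opnorm[of A "column k A"]
    by (simp add: mult_column)
  ultimately show ?thesis by simp
qed

lemma opnorm_le_card_if_unimodular:
  assumes unimodular: "\<forall>i j. norm (A$i$j) = 1"
  shows "opnorm A \<le> real CARD('n)"
proof (rule opnorm_bound)
  fix x :: "complex^'n"
  define s where "s = (\<Sum>j\<in>UNIV. norm (x$j))"
  have component_le: "norm ((A *v x)$i) \<le> s" for i
    unfolding s_def matrix_vector_mult_def
    using norm_sum[of "\<lambda>j. A$i$j * x$j" UNIV] by (simp add: norm_mult unimodular)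
  have "s\<^sup>2 \<le> (norm x)\<^sup>2 * real CARD('n)"
    unfolding s_def norm_vec_power2 by (rule sum_squared_le_sum_of_squares)
  have "(norm (A *v x))\<^sup>2 \<le> (\<Sum>i\<in>(UNIV::'n set). s\<^sup>2)"
    unfolding norm_vec_power2 by (intro sum_mono power_mono component_le) simp
  also have "\<dots> \<le> real CARD('n) * ((norm x)\<^sup>2 * real CARD('n))"
    using \<open>s\<^sup>2 \<le> _\<close> by simp
  also have "\<dots> = (real CARD('n) * norm x)\<^sup>2" by (simp add: power2_eq_square)
  finally show "norm (A *v x) \<le> real CARD('n) * norm x"
    by (rule power2_le_imp_le) simp
qed simp

text \<open>
  \<open>A\<close> is the rank-one matrix \<open>u v\<^sup>T\<close> with \<open>u = column k A\<close>, \<open>v = row k A\<close>; testing \<open>\<parallel>A\<parallel>\<close>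
  on \<open>cnj v\<close> bounds the Frobenius norm \<open>\<parallel>u\<parallel>\<^sup>2 \<parallel>v\<parallel>\<^sup>2\<close>.
\<close>

lemma sum_norm_entries_power2_le:
  assumes "opnorm A \<le> real CARD('n)"
  shows "(\<Sum>i\<in>UNIV. \<Sum>j\<in>UNIV. (norm (A$i$j))\<^sup>2) \<le> (real CARD('n))\<^sup>2"
proof -
  fix k :: 'n
  define S where "S = (\<Sum>j\<in>UNIV. (norm (A$k$j))\<^sup>2)"
  define X where "X = (\<Sum>i\<in>UNIV. (norm (A$i$k))\<^sup>2)"
  define v :: "complex^'n" where "v = (\<chi> j. cnj (A$k$j))"
  have "1 \<le> S"
    using member_le_sum[of k UNIV "\<lambda>j. (norm (A$k$j))\<^sup>2"] by (simp add: S_def)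
  have Av: "(A *v v)$i = A$i$k * of_real S" for i
  proof -
    have "A$i$j * cnj (A$k$j) = A$i$k * of_real ((norm (A$k$j))\<^sup>2)" for j
      using cocycle[of i j k] complex_norm_square[of "A$k$j"] by (simp add: mult.assoc)
    then show ?thesis
      by (simp add: matrix_vector_mult_def v_def S_def sum_distrib_left)
  qed
  have "(norm (A *v v))\<^sup>2 = X * S\<^sup>2"
    by (simp add: norm_vec_power2 Av norm_mult X_def sum_distrib_right power_mult_distrib)
  moreover have "(norm v)\<^sup>2 = S" by (simp add: norm_vec_power2 v_def S_def)
  moreover have "(norm (A *v v))\<^sup>2 \<le> (real CARD('n))\<^sup>2 * (norm v)\<^sup>2"
    using norm_matrix_vector_mult_le_opnorm[of A v] assms
    unfolding power_mult_distrib[symmetric]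
    by (intro power_mono) (meson mult_right_mono norm_ge_zero order_trans)+
  ultimately have "X * S\<^sup>2 \<le> (real CARD('n))\<^sup>2 * S" by simp
  hence "X * S \<le> (real CARD('n))\<^sup>2" using \<open>1 \<le> S\<close> by (simp add: power2_eq_square)
  moreover have "X * S = (\<Sum>i\<in>UNIV. \<Sum>j\<in>UNIV. (norm (A$i$j))\<^sup>2)"
    unfolding X_def S_def sum_product
    by (intro sum.cong refl) (metis cocycle norm_mult power_mult_distrib)
  ultimately show ?thesis by simp
qed

lemma unimodular_if_opnorm_le_card:
  assumes "opnorm A \<le> real CARD('n)"
  shows "\<forall>i j. norm (A$i$j) = 1"
proof (intro allI)
  fix a b
  define t where "t i j = (norm (A$i$j) - norm (A$j$i))\<^sup>2" for i j
  let ?F = "\<Sum>i\<in>UNIV. \<Sum>j\<in>UNIV. (norm (A$i$j))\<^sup>2"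
  have t_expand: "t i j = (norm (A$i$j))\<^sup>2 + (norm (A$j$i))\<^sup>2 - 2" for i j
    unfolding t_def power2_diff using norm_mult_transpose_entry[of i j] by simp
  have swap: "(\<Sum>i\<in>UNIV. \<Sum>j\<in>UNIV. (norm (A$j$i))\<^sup>2) = ?F" by (rule sum.swap)
  have "(\<Sum>i\<in>UNIV. \<Sum>j\<in>UNIV. t i j)
      = ?F + (\<Sum>i\<in>UNIV. \<Sum>j\<in>UNIV. (norm (A$j$i))\<^sup>2) - (\<Sum>i\<in>(UNIV::'n set). \<Sum>j\<in>(UNIV::'n set). 2)"
    by (simp add: t_expand sum_subtractf sum.distrib)
  also have "\<dots> = 2 * ?F - 2 * (real CARD('n))\<^sup>2"
    by (simp only: swap) (simp add: power2_eq_square)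
  finally have "(\<Sum>i\<in>UNIV. \<Sum>j\<in>UNIV. t i j) \<le> 0"
    using sum_norm_entries_power2_le[OF assms] by simp
  moreover have "0 \<le> (\<Sum>i\<in>UNIV. \<Sum>j\<in>UNIV. t i j)"
    unfolding t_def by (intro sum_nonneg) simp
  ultimately have "(\<Sum>i\<in>UNIV. \<Sum>j\<in>UNIV. t i j) = 0" by (rule antisym)
  hence "t a b = 0"
    by (simp add: sum_nonneg_eq_0_iff sum_nonneg t_def)
  hence "(norm (A$a$b))\<^sup>2 = 1\<^sup>2"
    using norm_mult_transpose_entry[of a b] by (simp add: t_def power2_eq_square)
  then show "norm (A$a$b) = 1"
    using power2_eq_iff_nonneg[of "norm (A$a$b)" 1] by simp
qed

text \<open>With unimodular entries, \<open>A \<circ> B = D B D\<^sup>*\<close> where \<open>D = diag (column k A)\<close> is unitary.\<close>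

lemma opnorm_schur_le_if_unimodular:
  assumes unimodular: "\<forall>i j. norm (A$i$j) = 1"
  shows "opnorm (schur A B) \<le> opnorm B"
proof (rule opnorm_bound)
  fix k :: 'n
  fix x :: "complex^'n"
  define w :: "complex^'n" where "w = (\<chi> j. A$k$j * x$j)"
  have "(schur A B *v x)$i = A$i$k * (B *v w)$i" for i
  proof -
    have "A$i$j * B$i$j * x$j = A$i$k * (B$i$j * (A$k$j * x$j))" for j
      by (simp add: cocycle[of i j k] algebra_simps)
    then show ?thesis
      unfolding matrix_vector_mult_def schur_def w_def
      by (simp only: vec_lambda_beta sum_distrib_left)
  qed
  hence "(norm (schur A B *v x))\<^sup>2 = (norm (B *v w))\<^sup>2"
    by (simp add: norm_vec_power2 norm_mult unimodular)
  moreover have "(norm w)\<^sup>2 = (norm x)\<^sup>2"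
    by (simp add: norm_vec_power2 w_def norm_mult unimodular)
  ultimately show "norm (schur A B *v x) \<le> opnorm B * norm x"
    using norm_matrix_vector_mult_le_opnorm[of B w] by (simp add: power2_eq_iff_nonneg)
qed (rule opnorm_nonneg)

lemma schur_map_norm_eq_1_iff: "schur_map_norm A = 1 \<longleftrightarrow> (\<forall>i j. norm (A$i$j) = 1)"
proof
  assume norm_1: "schur_map_norm A = 1"
  have le1: "norm (A$a$b) \<le> 1" for a b
  proof -
    have "norm (A$a$b) = norm (schur A (matrix_unit a b) $a$b)"
      by (simp add: schur_def matrix_unit_def)
    also have "\<dots> \<le> opnorm (schur A (matrix_unit a b))" by (rule norm_entry_le_opnorm)
    also have "\<dots> \<le> schur_map_norm A" unfolding schur_map_norm_def
      by (rule cSUP_upper[OF _ bdd_above_opnorm_schur]) (simp add: opnorm_matrix_unit_le)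
    finally show ?thesis using norm_1 by simp
  qed
  show "\<forall>i j. norm (A$i$j) = 1"
  proof (intro allI antisym)
    fix a b
    show "norm (A$a$b) \<le> 1" by (rule le1)
    have "1 = norm (A$a$b) * norm (A$b$a)" by (simp add: norm_mult_transpose_entry)
    also have "\<dots> \<le> norm (A$a$b)" using le1[of b a] by (simp add: mult_left_le)
    finally show "1 \<le> norm (A$a$b)" .
  qed
next
  assume "\<forall>i j. norm (A$i$j) = 1"
  then have "opnorm (schur A B) \<le> 1" if "opnorm B \<le> 1" for B
    using opnorm_schur_le_if_unimodular that by (metis order_trans)
  moreover have "schur A (mat 1) = mat 1" by (simp add: schur_def mat_def vec_eq_iff)
  ultimately show "schur_map_norm A = 1"
    unfolding schur_map_norm_def
    by (intro antisym cSUP_least cSUP_upper2[OF bdd_above_opnorm_schur, of "mat 1"])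
      (auto simp: opnorm_mat_1 intro: exI[of _ "mat 1"])
qed

end

theorem proposition2p5:
  fixes A :: "complex^'n^'n"
  assumes nonzero: "schur A \<noteq> (\<lambda>B. 0)"
    and mult: "\<forall>B C. schur A (B ** C) = schur A B ** schur A C"
  shows "((\<forall>B. schur A (cadj B) = cadj (schur A B)) \<longleftrightarrow> opnorm A = real CARD('n))
       \<and> (opnorm A = real CARD('n) \<longleftrightarrow> orth_proj (\<chi> i j. A$i$j / of_nat CARD('n)))
       \<and> (orth_proj (\<chi> i j. A$i$j / of_nat CARD('n)) \<longleftrightarrow> schur_map_norm A = 1)"
proof -
  interpret schur_cocycle A
    using schur_multiplicative_diag[OF nonzero mult] schur_multiplicative_cocycle[OF mult]
    by unfold_locales
  have "opnorm A = real CARD('n) \<longleftrightarrow> (\<forall>i j. norm (A$i$j) = 1)"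
    using card_le_opnorm opnorm_le_card_if_unimodular unimodular_if_opnorm_le_card
    by (metis antisym order_refl)
  then show ?thesis
    using schur_cadj_iff[of A] cadj_eq_iff_unimodular orth_proj_scaled_iff schur_map_norm_eq_1_iff
    by simp
qed

end
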